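(* Let $P\subseteq\mathbb R^n$ be a finite set, let $\alpha_0,\epsilon\ge0$, and let $P_0,P_1,\dots,P_m$ be finite sets with $P_0=P$ and, for each $k=0,\dots,m-1$, $P_{k+1}$ an $\alpha_0\epsilon^2(1+\epsilon)^{k-1}$-net of $P_k$. Then for every $k=0,\dots,m-1$, $$U(P;\alpha_0(1+\epsilon)^k)\subseteq U(P_{k+1};\alpha_0(1+\epsilon)^{k+1}).$$
   Context: For $\delta\ge0$, a subset $P'\subseteq Q$ is a $\delta$-net of $Q$ if (1) for every $q\in Q$ there is $q'\in P'$ with $\|q-q'\|\le\delta$, and (2) any two distinct $p,q\in P'$ satisfy $\|p-q\|>\delta$. For a finite $S\subseteq\mathbb R^n$ and $r\ge0$, $U(S;r)=\bigcup_{s\in S}B(s;r)$, where $B(s;r)$ is the open Euclidean ball of radius $r$ about $s$ for $r>0$, and $B(s;0)=\{s\}$. *)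

theory Defs
  imports "HOL-Analysis.Analysis"
begin

definition is_net :: "real \<Rightarrow> 'a::metric_space set \<Rightarrow> 'a set \<Rightarrow> bool" where
  "is_net \<delta> P' Q \<longleftrightarrow> P' \<subseteq> Q \<and>
     (\<forall>q\<in>Q. \<exists>q'\<in>P'. dist q q' \<le> \<delta>) \<and>
     (\<forall>p\<in>P'. \<forall>q\<in>P'. p \<noteq> q \<longrightarrow> dist p q > \<delta>)"

definition B :: "'a::metric_space \<Rightarrow> real \<Rightarrow> 'a set" where
  "B s r = (if r = 0 then {s} else ball s r)"

definition U :: "'a::metric_space set \<Rightarrow> real \<Rightarrow> 'a set" where
  "U S r = (\<Union>s\<in>S. B s r)"

end

theory Submission
  imports Defs
begin

text \<open>Following the chain of nets from a point of \<open>P = P\<^sub>0\<close> reaches a point of \<open>P\<^sub>k\<^sub>+\<^sub>1\<close>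
  within the sum of the net radii, and that geometric sum is at most \<open>\<alpha>\<^sub>0 \<epsilon> (1 + \<epsilon>)\<^sup>k\<close>.
  Hence the open ball of radius \<open>\<alpha>\<^sub>0 (1 + \<epsilon>)\<^sup>k\<close> about that point of \<open>P\<close> lies in the ball of
  radius \<open>\<alpha>\<^sub>0 (1 + \<epsilon>)\<^sup>k + \<alpha>\<^sub>0 \<epsilon> (1 + \<epsilon>)\<^sup>k = \<alpha>\<^sub>0 (1 + \<epsilon>)\<^sup>k\<^sup>+\<^sup>1\<close> about the net point.
  The degenerate case \<open>\<alpha>\<^sub>0 = 0\<close>, where all balls are singletons, is handled separately.\<close>

lemma U_zero [simp]: "U S 0 = S"
  by (simp add: U_def B_def)

lemma U_subset_U_add:
  assumes cover: "\<forall>s\<in>S. \<exists>t\<in>T. dist s t \<le> d" and "0 < r"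
  shows "U S r \<subseteq> U T (r + d)"
proof
  fix x assume "x \<in> U S r"
  then obtain s where "s \<in> S" and xs: "dist s x < r"
    using \<open>0 < r\<close> by (auto simp: U_def B_def)
  with cover obtain t where "t \<in> T" and st: "dist s t \<le> d" by blast
  have "dist t x < r + d"
    using dist_triangle[of t x s] xs st by (simp add: dist_commute)
  then show "x \<in> U T (r + d)"
    using \<open>t \<in> T\<close> by (auto simp: U_def B_def)
qed

lemma is_net_chain_dist:
  assumes "\<And>k. k < n \<Longrightarrow> is_net (\<delta> k) (Ps (Suc k)) (Ps k)"
  shows "\<forall>p\<in>Ps 0. \<exists>q\<in>Ps n. dist p q \<le> (\<Sum>k<n. \<delta> k)"
  using assms
proof (induction n)
  case 0
  then show ?case by auto
next
  case (Suc n)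
  show ?case
  proof
    fix p assume "p \<in> Ps 0"
    with Suc obtain q where "q \<in> Ps n" and pq: "dist p q \<le> (\<Sum>k<n. \<delta> k)"
      by auto
    with Suc.prems[of n] obtain q' where "q' \<in> Ps (Suc n)" and qq': "dist q q' \<le> \<delta> n"
      unfolding is_net_def by auto
    have "dist p q' \<le> (\<Sum>k<Suc n. \<delta> k)"
      using dist_triangle[of p q' q] pq qq' by simp
    with \<open>q' \<in> Ps (Suc n)\<close> show "\<exists>q\<in>Ps (Suc n). dist p q \<le> (\<Sum>k<Suc n. \<delta> k)"
      by blast
  qed
qed

lemma sum_net_radii_le:
  fixes e :: real
  assumes "e \<ge> 0"
  shows "(\<Sum>j<Suc k. e\<^sup>2 * (1 + e) powi (int j - 1)) \<le> e * (1 + e) ^ k"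
proof -
  have geometric: "(\<Sum>j<n. e\<^sup>2 * (1 + e) powi (int j - 1)) = e * ((1 + e) ^ n - 1) / (1 + e)"
    for n
  proof (induction n)
    case 0
    then show ?case by simp
  next
    case (Suc n)
    have "(1 + e) powi (int n - 1) = (1 + e) ^ n / (1 + e)"
      using assms by (simp add: power_int_diff)
    with Suc show ?case
      using assms by (simp add: field_simps power2_eq_square)
  qed
  show ?thesis
    unfolding geometric using assms by (simp add: field_simps)
qed

theorem lemma19:
  fixes P :: "'a::euclidean_space set"
    and Ps :: "nat \<Rightarrow> 'a set"
    and \<alpha>0 \<epsilon> :: real and m :: nat
  assumes "finite P"
    and "\<alpha>0 \<ge> 0" and "\<epsilon> \<ge> 0"
    and "\<And>k. k \<le> m \<Longrightarrow> finite (Ps k)"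
    and "Ps 0 = P"
    and "\<And>k. k < m \<Longrightarrow> is_net (\<alpha>0 * \<epsilon>^2 * (1 + \<epsilon>) powi (int k - 1)) (Ps (Suc k)) (Ps k)"
  shows "\<forall>k<m. U P (\<alpha>0 * (1 + \<epsilon>) ^ k) \<subseteq> U (Ps (Suc k)) (\<alpha>0 * (1 + \<epsilon>) ^ (Suc k))"
proof (intro allI impI)
  fix k assume "k < m"
  have "(\<Sum>j<Suc k. \<alpha>0 * \<epsilon>^2 * (1 + \<epsilon>) powi (int j - 1))
      = \<alpha>0 * (\<Sum>j<Suc k. \<epsilon>^2 * (1 + \<epsilon>) powi (int j - 1))"
    by (simp add: sum_distrib_left mult.assoc del: sum.lessThan_Suc)
  also have "\<dots> \<le> \<alpha>0 * (\<epsilon> * (1 + \<epsilon>) ^ k)"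
    using sum_net_radii_le[OF \<open>\<epsilon> \<ge> 0\<close>, of k] \<open>\<alpha>0 \<ge> 0\<close> by (rule mult_left_mono)
  finally have
    "(\<Sum>j<Suc k. \<alpha>0 * \<epsilon>^2 * (1 + \<epsilon>) powi (int j - 1)) \<le> \<alpha>0 * (\<epsilon> * (1 + \<epsilon>) ^ k)" .
  moreover have "\<forall>p\<in>Ps 0. \<exists>q\<in>Ps (Suc k).
      dist p q \<le> (\<Sum>j<Suc k. \<alpha>0 * \<epsilon>^2 * (1 + \<epsilon>) powi (int j - 1))"
    using \<open>k < m\<close> by (intro is_net_chain_dist assms(6)) simp
  ultimately have cover: "\<forall>p\<in>P. \<exists>q\<in>Ps (Suc k). dist p q \<le> \<alpha>0 * \<epsilon> * (1 + \<epsilon>) ^ k"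
    unfolding \<open>Ps 0 = P\<close> mult.assoc by (meson order_trans)
  show "U P (\<alpha>0 * (1 + \<epsilon>) ^ k) \<subseteq> U (Ps (Suc k)) (\<alpha>0 * (1 + \<epsilon>) ^ Suc k)"
  proof (cases "\<alpha>0 = 0")
    case True
    then show ?thesis using cover by auto
  next
    case False
    then have "0 < \<alpha>0 * (1 + \<epsilon>) ^ k"
      using assms(2,3) by simp
    from U_subset_U_add[OF cover this] show ?thesis
      by (simp add: algebra_simps)
  qed
qed

end
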